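(* Let $n\ge 3$ and $3\le i\le n$. Then the subgroup $H_{\Delta_i}=\langle P_n(D),\Delta_i\rangle$ of $B_n(D)$ is not bi-orderable, where $\Delta_i=\sigma_1(\sigma_2\sigma_1)\cdots(\sigma_{i-1}\cdots\sigma_2\sigma_1)$.
   Context: $B_n(D)$ is the Artin braid group on $n$ strands, with generators $\sigma_1,\dots,\sigma_{n-1}$ and relations $\sigma_i\sigma_j=\sigma_j\sigma_i$ for $|i-j|\ge 2$ and $\sigma_i\sigma_{i+1}\sigma_i=\sigma_{i+1}\sigma_i\sigma_{i+1}$. The permutation homomorphism $\pi: B_n(D)\to S_n$ is given by $\pi(\sigma_i)=(i,i+1)$, and $P_n(D)=\ker\pi$. $\langle P_n(D),\beta\rangle$ is the subgroup generated by $P_n(D)$ and $\beta$. A group is bi-orderable if it admits a strict total ordering invariant under both left and right multiplication. *)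

theory Defs
  imports "HOL-Algebra.Group" "HOL-Algebra.Generated_Groups" "HOL-Combinatorics.Transposition"
begin

text \<open>Braid words: a letter (i, True) is sigma_i, (i, False) is sigma_i inverse.\<close>
type_synonym bword = "(nat \<times> bool) list"

definition braid_word :: "nat \<Rightarrow> bword \<Rightarrow> bool" where
  "braid_word n w \<longleftrightarrow> (\<forall>(i, b) \<in> set w. 1 \<le> i \<and> i < n)"

inductive braid_equiv :: "nat \<Rightarrow> bword \<Rightarrow> bword \<Rightarrow> bool" for n where
  refl: "braid_word n w \<Longrightarrow> braid_equiv n w w"
| sym: "braid_equiv n w v \<Longrightarrow> braid_equiv n v w"
| trans: "braid_equiv n u v \<Longrightarrow> braid_equiv n v w \<Longrightarrow> braid_equiv n u w"
| ctxt: "braid_equiv n x y \<Longrightarrow> braid_word n u \<Longrightarrow> braid_word n v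
          \<Longrightarrow> braid_equiv n (u @ x @ v) (u @ y @ v)"
| cancel: "1 \<le> i \<Longrightarrow> i < n \<Longrightarrow> braid_equiv n [(i, b), (i, \<not> b)] []"
| comm: "1 \<le> i \<Longrightarrow> i < n \<Longrightarrow> 1 \<le> j \<Longrightarrow> j < n \<Longrightarrow> i + 2 \<le> j
          \<Longrightarrow> braid_equiv n [(i, True), (j, True)] [(j, True), (i, True)]"
| braid: "1 \<le> i \<Longrightarrow> Suc i < n
          \<Longrightarrow> braid_equiv n [(i, True), (Suc i, True), (i, True)]
                             [(Suc i, True), (i, True), (Suc i, True)]"

definition braid_class :: "nat \<Rightarrow> bword \<Rightarrow> bword set" where
  "braid_class n w = {v. braid_word n v \<and> braid_equiv n w v}"

definition braid_group :: "nat \<Rightarrow> bword set monoid" where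
  "braid_group n = \<lparr> carrier = {braid_class n w | w. braid_word n w},
     mult = (\<lambda>A B. braid_class n ((SOME a. a \<in> A) @ (SOME b. b \<in> B))),
     one = braid_class n [] \<rparr>"

fun perm_of_word :: "bword \<Rightarrow> nat \<Rightarrow> nat" where
  "perm_of_word [] = id"
| "perm_of_word ((i, b) # w) = transpose i (Suc i) \<circ> perm_of_word w"

definition pure_braid_group :: "nat \<Rightarrow> bword set set" where
  "pure_braid_group n = {A \<in> carrier (braid_group n). \<exists>w \<in> A. perm_of_word w = id}"

definition Delta_word :: "nat \<Rightarrow> bword" where
  "Delta_word i = concat (map (\<lambda>j. map (\<lambda>k. (k, True)) (rev [1..<Suc j])) [1..<i])"

definition bi_orderable :: "('a, 'b) monoid_scheme \<Rightarrow> bool" where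
  "bi_orderable G \<longleftrightarrow> (\<exists>r :: 'a \<Rightarrow> 'a \<Rightarrow> bool.
     (\<forall>a \<in> carrier G. \<not> r a a) \<and>
     (\<forall>a \<in> carrier G. \<forall>b \<in> carrier G. \<forall>c \<in> carrier G. r a b \<longrightarrow> r b c \<longrightarrow> r a c) \<and>
     (\<forall>a \<in> carrier G. \<forall>b \<in> carrier G. a \<noteq> b \<longrightarrow> r a b \<or> r b a) \<and>
     (\<forall>a \<in> carrier G. \<forall>b \<in> carrier G. \<forall>c \<in> carrier G.
        r a b \<longrightarrow> r (c \<otimes>\<^bsub>G\<^esub> a) (c \<otimes>\<^bsub>G\<^esub> b) \<and> r (a \<otimes>\<^bsub>G\<^esub> c) (b \<otimes>\<^bsub>G\<^esub> c)))"

end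

theory Submission
  imports Defs
begin

text \<open>Write \<open>i = k + 1\<close>. Conjugation by \<open>\<Delta>\<^sub>i\<close> exchanges \<open>\<sigma>\<^sub>1\<close> and \<open>\<sigma>\<^sub>k\<close>, so it sends the pure
  braid \<open>x = \<sigma>\<^sub>1\<^sup>2 \<sigma>\<^sub>k\<^sup>-\<^sup>2\<close> to \<open>\<sigma>\<^sub>k\<^sup>2 \<sigma>\<^sub>1\<^sup>-\<^sup>2 = x\<^sup>-\<^sup>1\<close>. In a bi-ordered group conjugation
  preserves the sign of an element and inversion reverses it, so an element conjugate to its
  inverse is trivial. But \<open>x \<noteq> 1\<close>: the signed number of crossings between the strands starting
  at positions 1 and 2 is invariant under the braid relations, and it is 2 for \<open>x\<close>.\<close>

lemma braid_word_Nil [simp]: "braid_word n []"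
  by (simp add: braid_word_def)

lemma braid_word_Cons [simp]: "braid_word n ((i, b) # w) \<longleftrightarrow> 1 \<le> i \<and> i < n \<and> braid_word n w"
  by (simp add: braid_word_def)

lemma braid_word_append [simp]: "braid_word n (u @ v) \<longleftrightarrow> braid_word n u \<and> braid_word n v"
  by (auto simp: braid_word_def)

lemma braid_equiv_imp_braid_word: "braid_equiv n x y \<Longrightarrow> braid_word n x \<and> braid_word n y"
  by (induction rule: braid_equiv.induct) auto

declare braid_equiv.trans [trans]

lemma braid_equiv_append_left: "braid_word n u \<Longrightarrow> braid_equiv n x y \<Longrightarrow> braid_equiv n (u @ x) (u @ y)"
  using braid_equiv.ctxt[of n x y u "[]"] by simp

lemma braid_equiv_append_right: "braid_equiv n x y \<Longrightarrow> braid_word n v \<Longrightarrow> braid_equiv n (x @ v) (y @ v)"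
  using braid_equiv.ctxt[of n x y "[]" v] by simp

lemma braid_equiv_in_context:
  assumes "braid_equiv n x y" and "braid_word n u" and "braid_word n v"
    and "s = u @ x @ v" and "t = u @ y @ v"
  shows "braid_equiv n s t"
  using braid_equiv.ctxt[OF assms(1-3)] assms(4,5) by simp

lemma braid_equiv_append:
  assumes "braid_equiv n x x'" and "braid_equiv n y y'"
  shows "braid_equiv n (x @ y) (x' @ y')"
proof -
  have "braid_equiv n (x @ y) (x' @ y)"
    using assms braid_equiv_imp_braid_word by (blast intro: braid_equiv_append_right)
  also have "braid_equiv n (x' @ y) (x' @ y')"
    using assms braid_equiv_imp_braid_word by (blast intro: braid_equiv_append_left)
  finally show ?thesis .
qed

lemma braid_class_eqI: "braid_equiv n w v \<Longrightarrow> braid_class n w = braid_class n v"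
  unfolding braid_class_def by (auto intro: braid_equiv.trans braid_equiv.sym)

lemma self_in_braid_class: "braid_word n w \<Longrightarrow> w \<in> braid_class n w"
  unfolding braid_class_def by (auto intro: braid_equiv.refl)

lemma braid_class_in_carrier [simp]:
  "braid_word n w \<Longrightarrow> braid_class n w \<in> carrier (braid_group n)"
  by (auto simp: braid_group_def)

lemma braid_group_carrierE:
  assumes "x \<in> carrier (braid_group n)"
  obtains w where "braid_word n w" and "x = braid_class n w"
  using assms by (auto simp: braid_group_def)

lemma one_braid_group: "\<one>\<^bsub>braid_group n\<^esub> = braid_class n []"
  by (simp add: braid_group_def)

lemma mult_braid_class:
  assumes "braid_word n w" and "braid_word n v"
  shows "braid_class n w \<otimes>\<^bsub>braid_group n\<^esub> braid_class n v = braid_class n (w @ v)"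
proof -
  define a where "a = (SOME a. a \<in> braid_class n w)"
  define b where "b = (SOME b. b \<in> braid_class n v)"
  have "a \<in> braid_class n w" "b \<in> braid_class n v"
    unfolding a_def b_def using assms by (auto intro: someI self_in_braid_class)
  then have "braid_equiv n (w @ v) (a @ b)"
    unfolding braid_class_def by (auto intro: braid_equiv_append)
  then show ?thesis
    unfolding braid_group_def by (simp add: a_def b_def braid_class_eqI)
qed

definition inverse_word :: "bword \<Rightarrow> bword" where
  "inverse_word w = rev (map (\<lambda>(i, b). (i, \<not> b)) w)"

lemma braid_word_inverse_word [simp]: "braid_word n (inverse_word w) \<longleftrightarrow> braid_word n w"
  by (auto simp: braid_word_def inverse_word_def)

lemma braid_equiv_inverse_word_append: "braid_word n w \<Longrightarrow> braid_equiv n (inverse_word w @ w) []"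
proof (induction w)
  case Nil
  then show ?case by (simp add: inverse_word_def braid_equiv.refl)
next
  case (Cons a w)
  obtain i b where a: "a = (i, b)" by fastforce
  have "braid_equiv n (inverse_word w @ [(i, \<not> b), (i, b)] @ w) (inverse_word w @ [] @ w)"
    using Cons.prems braid_equiv.cancel[of i n "\<not> b"] by (intro braid_equiv.ctxt) (auto simp: a)
  also have "braid_equiv n (inverse_word w @ [] @ w) []"
    using Cons by (simp add: a)
  finally show ?case
    by (simp add: a inverse_word_def)
qed

lemma group_braid_group: "group (braid_group n)"
proof (rule groupI)
  fix x
  assume "x \<in> carrier (braid_group n)"
  then obtain w where w: "braid_word n w" "x = braid_class n w"
    by (rule braid_group_carrierE)
  then have "braid_class n (inverse_word w) \<otimes>\<^bsub>braid_group n\<^esub> x = \<one>\<^bsub>braid_group n\<^esub>"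
    by (simp add: mult_braid_class one_braid_group braid_class_eqI braid_equiv_inverse_word_append)
  with w show "\<exists>y \<in> carrier (braid_group n). y \<otimes>\<^bsub>braid_group n\<^esub> x = \<one>\<^bsub>braid_group n\<^esub>"
    by auto
qed (auto elim!: braid_group_carrierE simp: mult_braid_class one_braid_group)

lemma inv_braid_class:
  assumes "braid_word n w"
  shows "inv\<^bsub>braid_group n\<^esub> braid_class n w = braid_class n (inverse_word w)"
  using assms group.inv_equality[OF group_braid_group]
  by (simp add: mult_braid_class one_braid_group braid_class_eqI braid_equiv_inverse_word_append)

definition descending_word :: "nat \<Rightarrow> bword" where
  "descending_word m = map (\<lambda>k. (k, True)) (rev [1..<Suc m])"

definition ascending_word :: "nat \<Rightarrow> bword" where
  "ascending_word m = map (\<lambda>k. (k, True)) [1..<Suc m]"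

lemma descending_word_0 [simp]: "descending_word 0 = []"
  and descending_word_Suc [simp]: "descending_word (Suc m) = (Suc m, True) # descending_word m"
  by (simp_all add: descending_word_def)

lemma ascending_word_0 [simp]: "ascending_word 0 = []"
  and ascending_word_Suc [simp]: "ascending_word (Suc m) = ascending_word m @ [(Suc m, True)]"
  by (simp_all add: ascending_word_def)

lemma Delta_word_Suc_0 [simp]: "Delta_word (Suc 0) = []"
  by (simp add: Delta_word_def)

lemma Delta_word_Suc: "1 \<le> m \<Longrightarrow> Delta_word (Suc m) = Delta_word m @ descending_word m"
  by (simp add: Delta_word_def descending_word_def)

lemma mem_descending_word: "(j, b) \<in> set (descending_word m) \<longleftrightarrow> b \<and> 1 \<le> j \<and> j \<le> m"
  by (auto simp: descending_word_def)

lemma mem_ascending_word: "(j, b) \<in> set (ascending_word m) \<longleftrightarrow> b \<and> 1 \<le> j \<and> j \<le> m"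
  by (auto simp: ascending_word_def)

lemma mem_Delta_word: "(j, b) \<in> set (Delta_word m) \<Longrightarrow> b \<and> 1 \<le> j \<and> j < m"
  by (auto simp: Delta_word_def)

lemma braid_word_descending_word [simp]: "m < n \<Longrightarrow> braid_word n (descending_word m)"
  and braid_word_ascending_word [simp]: "m < n \<Longrightarrow> braid_word n (ascending_word m)"
  and braid_word_Delta_word [simp]: "m \<le> n \<Longrightarrow> braid_word n (Delta_word m)"
  by (auto simp: braid_word_def mem_descending_word mem_ascending_word dest: mem_Delta_word)

lemma braid_equiv_commute_far_letter:
  assumes "\<forall>(j, b) \<in> set w. b \<and> 1 \<le> j \<and> j + 2 \<le> k" and "1 \<le> k" and "k < n"
  shows "braid_equiv n (w @ [(k, True)]) ((k, True) # w)"
  using assms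
proof (induction w)
  case Nil
  then show ?case by (simp add: braid_equiv.refl)
next
  case (Cons a w)
  then obtain j where a: "a = (j, True)" "1 \<le> j" "j + 2 \<le> k"
    by auto
  have "braid_equiv n ((j, True) # w @ [(k, True)]) ((j, True) # (k, True) # w)"
    using Cons a braid_equiv_append_left[of n "[(j, True)]"] by simp
  also have "braid_equiv n \<dots> ((k, True) # (j, True) # w)"
    by (rule braid_equiv_in_context[OF braid_equiv.comm[of j n k], of "[]" w])
      (use Cons a in \<open>auto simp: braid_word_def\<close>)
  finally show ?case
    using a by simp
qed

lemma descending_word_sigma:
  assumes "Suc (Suc m) < n"
  shows "braid_equiv n (descending_word (Suc (Suc m)) @ [(Suc (Suc m), True)])
                       ((Suc m, True) # descending_word (Suc (Suc m)))"
proof -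
  have "braid_equiv n (descending_word m @ [(Suc (Suc m), True)]) ((Suc (Suc m), True) # descending_word m)"
    using assms by (intro braid_equiv_commute_far_letter) (auto simp: mem_descending_word)
  then have "braid_equiv n (descending_word (Suc (Suc m)) @ [(Suc (Suc m), True)])
      ((Suc (Suc m), True) # (Suc m, True) # (Suc (Suc m), True) # descending_word m)"
    using assms braid_equiv_append_left[of n "[(Suc (Suc m), True), (Suc m, True)]"] by simp
  also have "braid_equiv n \<dots> ((Suc m, True) # (Suc (Suc m), True) # (Suc m, True) # descending_word m)"
    using assms braid_equiv_append_right[OF braid_equiv.sym[OF braid_equiv.braid[of "Suc m" n]],
        of "descending_word m"] by simp
  finally show ?thesis
    by simp
qed

lemma ascending_word_sigma:
  assumes "Suc (Suc m) < n"
  shows "braid_equiv n (ascending_word (Suc (Suc m)) @ [(Suc m, True)])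
                       ((Suc (Suc m), True) # ascending_word (Suc (Suc m)))"
proof -
  have "braid_equiv n (ascending_word (Suc (Suc m)) @ [(Suc m, True)])
      (ascending_word m @ [(Suc (Suc m), True), (Suc m, True), (Suc (Suc m), True)])"
    using assms braid_equiv_append_left[OF _ braid_equiv.braid[of "Suc m" n], of "ascending_word m"]
    by simp
  also have "braid_equiv n \<dots> ((Suc (Suc m), True) # ascending_word (Suc (Suc m)))"
  proof -
    have "braid_equiv n (ascending_word m @ [(Suc (Suc m), True)]) ((Suc (Suc m), True) # ascending_word m)"
      using assms by (intro braid_equiv_commute_far_letter) (auto simp: mem_ascending_word)
    then show ?thesis
      by (rule braid_equiv_in_context[of _ _ _ "[]" "[(Suc m, True), (Suc (Suc m), True)]"])
        (use assms in simp_all)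
  qed
  finally show ?thesis .
qed

lemma ascending_word_Delta_word:
  "1 \<le> m \<Longrightarrow> m < n \<Longrightarrow> braid_equiv n (ascending_word m @ Delta_word m) (Delta_word (Suc m))"
proof (induction m rule: dec_induct)
  case base
  then show ?case by (simp add: Delta_word_Suc braid_equiv.refl)
next
  case (step m)
  have "braid_equiv n (Delta_word m @ [(Suc m, True)]) ((Suc m, True) # Delta_word m)"
    using step by (intro braid_equiv_commute_far_letter) (auto dest: mem_Delta_word)
  then have commute: "braid_equiv n ((Suc m, True) # Delta_word m) (Delta_word m @ [(Suc m, True)])"
    by (rule braid_equiv.sym)
  have "ascending_word (Suc m) @ Delta_word (Suc m)
      = ascending_word m @ ((Suc m, True) # Delta_word m) @ descending_word m"
    using step by (simp add: Delta_word_Suc)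
  also have "braid_equiv n \<dots> (ascending_word m @ (Delta_word m @ [(Suc m, True)]) @ descending_word m)"
    by (rule braid_equiv.ctxt[OF commute]) (use step in simp_all)
  also have "\<dots> = (ascending_word m @ Delta_word m) @ (Suc m, True) # descending_word m"
    by simp
  also have "braid_equiv n \<dots> (Delta_word (Suc m) @ (Suc m, True) # descending_word m)"
    by (rule braid_equiv_append_right[OF step.IH]) (use step in simp_all)
  also have "\<dots> = Delta_word (Suc (Suc m))"
    using step by (simp add: Delta_word_Suc)
  finally show ?case .
qed

lemma Delta_word_sigma_last:
  "1 \<le> m \<Longrightarrow> m < n \<Longrightarrow> braid_equiv n (Delta_word (Suc m) @ [(m, True)]) ((1, True) # Delta_word (Suc m))"
proof (induction m rule: dec_induct)
  case base
  then show ?case by (simp add: Delta_word_Suc braid_equiv.refl)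
next
  case (step m)
  then obtain j where m: "m = Suc j"
    by (cases m) auto
  have "Delta_word (Suc (Suc m)) @ [(Suc m, True)]
      = Delta_word (Suc m) @ (descending_word (Suc m) @ [(Suc m, True)])"
    using step by (simp add: Delta_word_Suc)
  also have "braid_equiv n \<dots> (Delta_word (Suc m) @ ((m, True) # descending_word (Suc m)))"
    using step descending_word_sigma[of j n] by (intro braid_equiv_append_left) (simp_all add: m)
  also have "\<dots> = (Delta_word (Suc m) @ [(m, True)]) @ descending_word (Suc m)"
    by simp
  also have "braid_equiv n \<dots> (((1, True) # Delta_word (Suc m)) @ descending_word (Suc m))"
    by (rule braid_equiv_append_right[OF step.IH]) (use step in simp_all)
  also have "\<dots> = (1, True) # Delta_word (Suc (Suc m))"
    using step by (simp add: Delta_word_Suc)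
  finally show ?case .
qed

lemma Delta_word_sigma_first:
  "1 \<le> m \<Longrightarrow> m < n \<Longrightarrow> braid_equiv n (Delta_word (Suc m) @ [(1, True)]) ((m, True) # Delta_word (Suc m))"
proof (induction m rule: dec_induct)
  case base
  then show ?case by (simp add: Delta_word_Suc braid_equiv.refl)
next
  case (step m)
  then obtain j where m: "m = Suc j"
    by (cases m) auto
  have "braid_equiv n (Delta_word (Suc (Suc m)) @ [(1, True)])
      ((ascending_word (Suc m) @ Delta_word (Suc m)) @ [(1, True)])"
    using step ascending_word_Delta_word[of "Suc m" n]
    by (intro braid_equiv_append_right) (simp_all add: braid_equiv.sym)
  also have "\<dots> = ascending_word (Suc m) @ (Delta_word (Suc m) @ [(1, True)])"
    by simp
  also have "braid_equiv n \<dots> (ascending_word (Suc m) @ ((m, True) # Delta_word (Suc m)))"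
    by (rule braid_equiv_append_left[OF _ step.IH]) (use step in simp_all)
  also have "\<dots> = (ascending_word (Suc m) @ [(m, True)]) @ Delta_word (Suc m)"
    by simp
  also have "braid_equiv n \<dots> (((Suc m, True) # ascending_word (Suc m)) @ Delta_word (Suc m))"
    using step ascending_word_sigma[of j n] by (intro braid_equiv_append_right) (simp_all add: m)
  also have "\<dots> = [(Suc m, True)] @ (ascending_word (Suc m) @ Delta_word (Suc m))"
    by simp
  also have "braid_equiv n \<dots> ([(Suc m, True)] @ Delta_word (Suc (Suc m)))"
    using step ascending_word_Delta_word[of "Suc m" n] by (intro braid_equiv_append_left) simp_all
  finally show ?case
    by simp
qed

lemma Delta_conj_swaps_end_generators:
  assumes "2 \<le> k" and "k < n"
  defines "g \<equiv> braid_class n (Delta_word (Suc k))"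
    and "s\<^sub>1 \<equiv> braid_class n [(1, True)]" and "s\<^sub>k \<equiv> braid_class n [(k, True)]"
  shows "g \<otimes>\<^bsub>braid_group n\<^esub> s\<^sub>1 = s\<^sub>k \<otimes>\<^bsub>braid_group n\<^esub> g"
    and "g \<otimes>\<^bsub>braid_group n\<^esub> s\<^sub>k = s\<^sub>1 \<otimes>\<^bsub>braid_group n\<^esub> g"
  using assms Delta_word_sigma_first[of k n] Delta_word_sigma_last[of k n]
  by (simp_all add: mult_braid_class braid_class_eqI)

lemma (in group) conjugate_square:
  assumes "g \<in> carrier G" "a \<in> carrier G" "b \<in> carrier G" and "g \<otimes> a = b \<otimes> g"
  shows "g \<otimes> (a \<otimes> a) = (b \<otimes> b) \<otimes> g"
  using assms by (metis m_assoc)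

lemma (in group) conj_swap_inverts_quotient:
  assumes "g \<in> carrier G" "a \<in> carrier G" "b \<in> carrier G"
    and "g \<otimes> a = b \<otimes> g" and "g \<otimes> b = a \<otimes> g"
  shows "g \<otimes> (a \<otimes> inv b) = inv (a \<otimes> inv b) \<otimes> g"
proof -
  have "g \<otimes> inv b = inv a \<otimes> g"
    using assms by (metis inv_solve_left inv_solve_right m_assoc m_closed inv_closed)
  then have "g \<otimes> (a \<otimes> inv b) = b \<otimes> inv a \<otimes> g"
    using assms by (metis m_assoc inv_closed)
  then show ?thesis
    using assms by (simp add: inv_mult_group)
qed

lemma (in group) bi_orderable_conj_eq_inv_imp_one:
  assumes "bi_orderable G" and g: "g \<in> carrier G" and x: "x \<in> carrier G"
    and conj: "g \<otimes> x = inv x \<otimes> g"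
  shows "x = \<one>"
proof (rule ccontr)
  assume "x \<noteq> \<one>"
  from assms(1) obtain r where irrefl: "\<forall>a \<in> carrier G. \<not> r a a"
    and trans: "\<forall>a \<in> carrier G. \<forall>b \<in> carrier G. \<forall>c \<in> carrier G. r a b \<longrightarrow> r b c \<longrightarrow> r a c"
    and total: "\<forall>a \<in> carrier G. \<forall>b \<in> carrier G. a \<noteq> b \<longrightarrow> r a b \<or> r b a"
    and mono: "\<forall>a \<in> carrier G. \<forall>b \<in> carrier G. \<forall>c \<in> carrier G.
                 r a b \<longrightarrow> r (c \<otimes> a) (c \<otimes> b) \<and> r (a \<otimes> c) (b \<otimes> c)"
    unfolding bi_orderable_def by blast
  have left: "r (c \<otimes> a) (c \<otimes> b)" and right: "r (a \<otimes> c) (b \<otimes> c)"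
    if "a \<in> carrier G" "b \<in> carrier G" "c \<in> carrier G" "r a b" for a b c
    using mono that by blast+
  have "r g (inv x \<otimes> g) \<and> r (inv x \<otimes> g) g"
  proof (cases "r \<one> x")
    case True
    then have "r (inv x) \<one>"
      using left[of \<one> x "inv x"] x by simp
    then have "r (inv x \<otimes> g) g"
      using right[of "inv x" \<one> g] x g by simp
    moreover have "r g (inv x \<otimes> g)"
      using left[OF _ x g True] g by (simp add: conj)
    ultimately show ?thesis by simp
  next
    case False
    then have "r x \<one>"
      using total \<open>x \<noteq> \<one>\<close> x by auto
    then have "r \<one> (inv x)"
      using left[of x \<one> "inv x"] x by simp
    then have "r g (inv x \<otimes> g)"
      using right[of \<one> "inv x" g] x g by simp
    moreover have "r (inv x \<otimes> g) g"
      using left[OF x _ g \<open>r x \<one>\<close>] g by (simp add: conj)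
    ultimately show ?thesis by simp
  qed
  then show False
    using trans irrefl x g by blast
qed

lemma (in group) subgroup_not_bi_orderable_if_conj_eq_inv:
  assumes "subgroup H G" and "g \<in> H" "x \<in> H" and "g \<otimes> x = inv x \<otimes> g" and "x \<noteq> \<one>"
  shows "\<not> bi_orderable (G\<lparr>carrier := H\<rparr>)"
proof
  assume "bi_orderable (G\<lparr>carrier := H\<rparr>)"
  moreover have "group (G\<lparr>carrier := H\<rparr>)"
    using assms(1) is_group by (rule subgroup.subgroup_is_group)
  ultimately have "x = \<one>\<^bsub>G\<lparr>carrier := H\<rparr>\<^esub>"
    using assms(1-4) by (intro group.bi_orderable_conj_eq_inv_imp_one[of _ g]) simp_all
  with assms(5) show False
    by simp
qed

text \<open>The state \<open>(p, c)\<close>: \<open>p\<close> sends each current position to the starting position of the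
  strand there, and \<open>c\<close> counts the signed crossings between the strands starting at 1 and 2.\<close>
fun crossing_step :: "nat \<times> bool \<Rightarrow> (nat \<Rightarrow> nat) \<times> int \<Rightarrow> (nat \<Rightarrow> nat) \<times> int" where
  "crossing_step (k, b) (p, c) = (p \<circ> transpose k (Suc k),
      c + (if {p k, p (Suc k)} = {1, 2} then (if b then 1 else -1) else 0))"

lemma braid_equiv_fold_crossing_step:
  "braid_equiv n x y \<Longrightarrow> fold crossing_step x = fold crossing_step y"
proof (induction rule: braid_equiv.induct)
  case (ctxt x y u v)
  then show ?case by simp
next
  case (cancel i b)
  show ?case
    by (rule ext, clarify) (auto simp: transpose_def fun_eq_iff insert_commute)
next
  case (comm i j)
  then show ?case
    by (intro ext, clarify) (auto simp: transpose_def fun_eq_iff)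
next
  case (braid i)
  show ?case
    by (rule ext, clarify) (auto simp: transpose_def fun_eq_iff insert_commute)
qed auto

definition crossing_number :: "bword \<Rightarrow> int" where
  "crossing_number w = snd (fold crossing_step w (id, 0))"

lemma braid_class_neq_one_if_crossing_number:
  assumes "braid_word n w" and "crossing_number w \<noteq> 0"
  shows "braid_class n w \<noteq> \<one>\<^bsub>braid_group n\<^esub>"
proof
  assume "braid_class n w = \<one>\<^bsub>braid_group n\<^esub>"
  then have "braid_equiv n [] w"
    using self_in_braid_class[OF assms(1)] by (simp add: one_braid_group braid_class_def)
  then show False
    using assms(2) braid_equiv_fold_crossing_step by (fastforce simp: crossing_number_def)
qed

definition sigma_square_quotient :: "nat \<Rightarrow> bword" where
  "sigma_square_quotient k = [(1, True), (1, True), (k, False), (k, False)]"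

lemma braid_word_sigma_square_quotient [simp]:
  "1 \<le> k \<Longrightarrow> k < n \<Longrightarrow> braid_word n (sigma_square_quotient k)"
  by (simp add: sigma_square_quotient_def)

lemma braid_class_sigma_square_quotient_pure:
  assumes "1 \<le> k" and "k < n"
  shows "braid_class n (sigma_square_quotient k) \<in> pure_braid_group n"
proof -
  have "perm_of_word (sigma_square_quotient k) = id"
    by (simp add: sigma_square_quotient_def fun_eq_iff transpose_def)
  moreover have "sigma_square_quotient k \<in> braid_class n (sigma_square_quotient k)"
    using assms by (simp add: self_in_braid_class)
  ultimately show ?thesis
    using assms unfolding pure_braid_group_def by auto
qed

lemma braid_class_sigma_square_quotient_neq_one:
  assumes "2 \<le> k" and "k < n"
  shows "braid_class n (sigma_square_quotient k) \<noteq> \<one>\<^bsub>braid_group n\<^esub>"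
proof -
  have "crossing_number (sigma_square_quotient k) = 2"
    using assms
    by (auto simp: sigma_square_quotient_def crossing_number_def transpose_def numeral_2_eq_2
        insert_commute doubleton_eq_iff)
  then show ?thesis
    using assms by (intro braid_class_neq_one_if_crossing_number) simp_all
qed

lemma Delta_conj_sigma_square_quotient:
  assumes "2 \<le> k" and "k < n"
  defines "g \<equiv> braid_class n (Delta_word (Suc k))"
    and "x \<equiv> braid_class n (sigma_square_quotient k)"
  shows "g \<otimes>\<^bsub>braid_group n\<^esub> x = inv\<^bsub>braid_group n\<^esub> x \<otimes>\<^bsub>braid_group n\<^esub> g"
proof -
  interpret B: group "braid_group n"
    by (rule group_braid_group)
  define s\<^sub>1 where "s\<^sub>1 = braid_class n [(1, True)]"
  define s\<^sub>k where "s\<^sub>k = braid_class n [(k, True)]"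
  have carrier: "g \<in> carrier (braid_group n)" "s\<^sub>1 \<in> carrier (braid_group n)" "s\<^sub>k \<in> carrier (braid_group n)"
    using assms by (simp_all add: g_def s\<^sub>1_def s\<^sub>k_def)
  have "g \<otimes>\<^bsub>braid_group n\<^esub> (s\<^sub>1 \<otimes>\<^bsub>braid_group n\<^esub> s\<^sub>1)
      = (s\<^sub>k \<otimes>\<^bsub>braid_group n\<^esub> s\<^sub>k) \<otimes>\<^bsub>braid_group n\<^esub> g"
    using carrier Delta_conj_swaps_end_generators(1)[OF assms(1,2)]
    by (intro B.conjugate_square) (simp_all add: g_def s\<^sub>1_def s\<^sub>k_def)
  moreover have "g \<otimes>\<^bsub>braid_group n\<^esub> (s\<^sub>k \<otimes>\<^bsub>braid_group n\<^esub> s\<^sub>k)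
      = (s\<^sub>1 \<otimes>\<^bsub>braid_group n\<^esub> s\<^sub>1) \<otimes>\<^bsub>braid_group n\<^esub> g"
    using carrier Delta_conj_swaps_end_generators(2)[OF assms(1,2)]
    by (intro B.conjugate_square) (simp_all add: g_def s\<^sub>1_def s\<^sub>k_def)
  moreover have "x = (s\<^sub>1 \<otimes>\<^bsub>braid_group n\<^esub> s\<^sub>1) \<otimes>\<^bsub>braid_group n\<^esub> inv\<^bsub>braid_group n\<^esub> (s\<^sub>k \<otimes>\<^bsub>braid_group n\<^esub> s\<^sub>k)"
    using assms
    by (simp add: x_def s\<^sub>1_def s\<^sub>k_def sigma_square_quotient_def mult_braid_class inv_braid_class
        inverse_word_def)
  ultimately show ?thesis
    using carrier by (simp add: B.conj_swap_inverts_quotient)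
qed

theorem mainTheorem10:
  fixes n i :: nat
  assumes "3 \<le> n" and "3 \<le> i" and "i \<le> n"
  shows "\<not> bi_orderable ((braid_group n) \<lparr> carrier :=
            generate (braid_group n)
              (pure_braid_group n \<union> {braid_class n (Delta_word i)}) \<rparr>)"
proof -
  interpret B: group "braid_group n"
    by (rule group_braid_group)
  obtain k where "i = Suc k"
    using assms(2) by (cases i) auto
  with assms have k: "i = Suc k" "2 \<le> k" "k < n"
    by auto
  let ?H = "generate (braid_group n) (pure_braid_group n \<union> {braid_class n (Delta_word i)})"
  let ?x = "braid_class n (sigma_square_quotient k)"
  show ?thesis
  proof (rule B.subgroup_not_bi_orderable_if_conj_eq_inv)
    show "subgroup ?H (braid_group n)"
      using assms by (intro B.generate_is_subgroup) (auto simp: pure_braid_group_def)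
    show "braid_class n (Delta_word i) \<in> ?H" and "?x \<in> ?H"
      using k braid_class_sigma_square_quotient_pure[of k n] by (auto intro: generate.incl)
    show "braid_class n (Delta_word i) \<otimes>\<^bsub>braid_group n\<^esub> ?x
        = inv\<^bsub>braid_group n\<^esub> ?x \<otimes>\<^bsub>braid_group n\<^esub> braid_class n (Delta_word i)"
      using Delta_conj_sigma_square_quotient[OF k(2,3)] by (simp add: k(1))
    show "?x \<noteq> \<one>\<^bsub>braid_group n\<^esub>"
      using k by (intro braid_class_sigma_square_quotient_neq_one)
  qed
qed

end
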